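(* Let $X$ and $Y$ be finite $T_0$-spaces. If $X$ and $Y$ are simple homotopy equivalent, then $|\det(X_M)|=|\det(Y_M)|$.
   Context: A finite $T_0$-space is identified with a finite poset via $x\le y$ iff $U_x\subseteq U_y$, where $U_x$ is the minimal open set containing $x$. For a labelling $X=\{x_1,\dots,x_n\}$, $X_M=(x_{i,j})$ is the $n\times n$ matrix with $x_{i,j}=0$ if $x_i\le x_j$ and $x_{i,j}=1$ otherwise. A point $x$ is a weak beat point if $\{y:y<x\}$ is contractible or $\{y:y>x\}$ is contractible. Two finite $T_0$-spaces are simple homotopy equivalent if one can be obtained from the other (up to homeomorphism) by a finite sequence of adding and removing weak beat points one at a time. *)

theory Defs
  imports "HOL-Analysis.Analysis" "Jordan_Normal_Form.Determinant"
begin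

text \<open>A finite T0-space is represented (as in the paper) by its associated finite
  poset: a finite carrier S together with a partial order R on S
  (R x y meaning U_x is contained in U_y).\<close>

definition finite_poset :: "'a set \<Rightarrow> ('a \<Rightarrow> 'a \<Rightarrow> bool) \<Rightarrow> bool" where
  "finite_poset S R \<longleftrightarrow> finite S
     \<and> (\<forall>x\<in>S. R x x)
     \<and> (\<forall>x\<in>S. \<forall>y\<in>S. R x y \<and> R y x \<longrightarrow> x = y)
     \<and> (\<forall>x\<in>S. \<forall>y\<in>S. \<forall>z\<in>S. R x y \<and> R y z \<longrightarrow> R x z)"

text \<open>The finite T0 topology on S recovered from the order: open sets are the down-sets,
  so the minimal open set of x is U_x = {y in S. R y x}.\<close>

definition poset_topology :: "'a set \<Rightarrow> ('a \<Rightarrow> 'a \<Rightarrow> bool) \<Rightarrow> 'a topology" where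
  "poset_topology S R =
     topology (\<lambda>U. U \<subseteq> S \<and> (\<forall>x\<in>U. \<forall>y\<in>S. R y x \<longrightarrow> y \<in> U))"

text \<open>Contractible (as usual, contractible spaces are nonempty).\<close>

definition contractible_sub :: "'a set \<Rightarrow> ('a \<Rightarrow> 'a \<Rightarrow> bool) \<Rightarrow> 'a set \<Rightarrow> bool" where
  "contractible_sub S R A \<longleftrightarrow> A \<noteq> {} \<and> contractible_space (subtopology (poset_topology S R) A)"

definition weak_beat_point :: "'a set \<Rightarrow> ('a \<Rightarrow> 'a \<Rightarrow> bool) \<Rightarrow> 'a \<Rightarrow> bool" where
  "weak_beat_point S R x \<longleftrightarrow> x \<in> S \<and>
     (contractible_sub S R {y\<in>S. R y x \<and> y \<noteq> x}
      \<or> contractible_sub S R {y\<in>S. R x y \<and> y \<noteq> x})"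

definition wbp_step :: "'a set \<Rightarrow> ('a \<Rightarrow> 'a \<Rightarrow> bool) \<Rightarrow> 'a set \<Rightarrow> ('a \<Rightarrow> 'a \<Rightarrow> bool) \<Rightarrow> bool" where
  "wbp_step S R S' R' \<longleftrightarrow> finite_poset S R \<and> finite_poset S' R' \<and>
     ((\<exists>x. weak_beat_point S R x \<and>
          poset_topology (S - {x}) R homeomorphic_space poset_topology S' R')
    \<or> (\<exists>x. weak_beat_point S' R' x \<and>
          poset_topology S R homeomorphic_space poset_topology (S' - {x}) R'))"

definition simple_homotopy_equivalent ::
  "'a set \<Rightarrow> ('a \<Rightarrow> 'a \<Rightarrow> bool) \<Rightarrow> 'a set \<Rightarrow> ('a \<Rightarrow> 'a \<Rightarrow> bool) \<Rightarrow> bool" where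
  "simple_homotopy_equivalent S R T R' \<longleftrightarrow>
     (\<exists>S0 R0. (\<lambda>(A,r) (B,r'). wbp_step A r B r')\<^sup>*\<^sup>* (S, R) (S0, R0)
        \<and> poset_topology S0 R0 homeomorphic_space poset_topology T R')"

definition space_matrix :: "nat \<Rightarrow> (nat \<Rightarrow> 'a) \<Rightarrow> ('a \<Rightarrow> 'a \<Rightarrow> bool) \<Rightarrow> int mat" where
  "space_matrix n f R = mat n n (\<lambda>(i,j). if R (f i) (f j) then 0 else 1)"

end

theory Submission
  imports Defs
begin

(* X_M is J - Z, where J is the all-ones matrix and Z the zeta matrix of the order.
   Expanding along a minimal point shows that det (J - Z) = (-1)^n * chain_sum X, the signed
   count of chains of X, which up to sign is the reduced Euler characteristic of the order
   complex.  Deleting a point x changes chain_sum by the product of the chain sums of the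
   strict down-set and the strict up-set of x.  A contractible finite space has chain sum 0:
   by Stong's argument it reduces to a point by deleting beat points, each of which has a cone
   as its link.  Hence deleting or adding a weak beat point preserves chain_sum, and so does
   a homeomorphism. *)

section \<open>Chains of a finite poset\<close>

lemma finite_poset_subset: "finite_poset S R \<Longrightarrow> T \<subseteq> S \<Longrightarrow> finite_poset T R"
  unfolding finite_poset_def by (meson finite_subset subsetD)

lemma finite_poset_converse: "finite_poset S R \<Longrightarrow> finite_poset S (\<lambda>x y. R y x)"
  unfolding finite_poset_def by blast

lemma finite_poset_ex_minimal:
  assumes "finite_poset S R" and "x \<in> S" and "P x"
  shows "\<exists>m\<in>S. P m \<and> (\<forall>y\<in>S. R y m \<longrightarrow> P y \<longrightarrow> y = m)"
proof -
  have fin: "finite S" and antisym: "\<And>a b. a \<in> S \<Longrightarrow> b \<in> S \<Longrightarrow> R a b \<Longrightarrow> R b a \<Longrightarrow> a = b"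
    and trans: "\<And>a b c. a \<in> S \<Longrightarrow> b \<in> S \<Longrightarrow> c \<in> S \<Longrightarrow> R a b \<Longrightarrow> R b c \<Longrightarrow> R a c"
    using assms(1) unfolding finite_poset_def by blast+
  have "asymp_on S (\<lambda>a b. R a b \<and> a \<noteq> b)" unfolding asymp_on_def using antisym by blast
  moreover have "transp_on S (\<lambda>a b. R a b \<and> a \<noteq> b)" unfolding transp_on_def using antisym trans by blast
  moreover have "\<exists>x\<in>S. P x" using assms(2,3) by blast
  ultimately have "\<exists>m\<in>S. P m \<and> (\<forall>y\<in>S. R y m \<and> y \<noteq> m \<longrightarrow> \<not> P y)"
    by (rule Finite_Set.bex_min_element_with_property[OF fin])
  then show ?thesis by blast
qed

definition poset_chains :: "'a set \<Rightarrow> ('a \<Rightarrow> 'a \<Rightarrow> bool) \<Rightarrow> 'a set set" where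
  "poset_chains S R = {c. c \<subseteq> S \<and> (\<forall>a\<in>c. \<forall>b\<in>c. R a b \<or> R b a)}"

(* Minus the reduced Euler characteristic of the order complex: the empty chain counts too. *)
definition chain_sum :: "'a set \<Rightarrow> ('a \<Rightarrow> 'a \<Rightarrow> bool) \<Rightarrow> int" where
  "chain_sum S R = (\<Sum>c\<in>poset_chains S R. (-1) ^ card c)"

definition poset_link :: "'a set \<Rightarrow> ('a \<Rightarrow> 'a \<Rightarrow> bool) \<Rightarrow> 'a \<Rightarrow> 'a set" where
  "poset_link S R x = {y\<in>S. y \<noteq> x \<and> (R y x \<or> R x y)}"

lemma finite_poset_chains: "finite S \<Longrightarrow> finite (poset_chains S R)"
  unfolding poset_chains_def by (rule finite_subset[of _ "Pow S"]) auto

lemma chain_sum_empty [simp]: "chain_sum {} R = 1"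
proof -
  have "poset_chains {} R = {{}}" unfolding poset_chains_def by auto
  then show ?thesis unfolding chain_sum_def by simp
qed

lemma sum_sign_card_insert:
  assumes "\<And>c. c \<in> B \<Longrightarrow> finite c \<and> x \<notin> c"
  shows "(\<Sum>c\<in>insert x ` B. (-1::int) ^ card c) = - (\<Sum>c\<in>B. (-1) ^ card c)"
proof -
  have "inj_on (insert x) B"
    by (rule inj_on_inverseI[where g = "\<lambda>c. c - {x}"]) (use assms in auto)
  then have "(\<Sum>c\<in>insert x ` B. (-1::int) ^ card c) = (\<Sum>c\<in>B. (-1) ^ card (insert x c))"
    by (simp add: sum.reindex)
  also have "\<dots> = (\<Sum>c\<in>B. - ((-1) ^ card c))"
    by (rule sum.cong) (simp_all add: assms)
  finally show ?thesis by (simp add: sum_negf)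
qed

lemma chain_sum_delete:
  assumes "finite_poset S R" and "x \<in> S"
  shows "chain_sum S R = chain_sum (S - {x}) R - chain_sum (poset_link S R x) R"
proof -
  let ?C = "poset_chains (S - {x}) R" and ?L = "poset_chains (poset_link S R x) R"
  have fin: "finite S" and refl: "R x x" using assms unfolding finite_poset_def by auto
  have split: "poset_chains S R = ?C \<union> insert x ` ?L"
  proof (intro equalityI subsetI)
    fix c assume c: "c \<in> poset_chains S R"
    show "c \<in> ?C \<union> insert x ` ?L"
    proof (cases "x \<in> c")
      case True
      then have "c - {x} \<in> ?L" and "c = insert x (c - {x})"
        using c unfolding poset_chains_def poset_link_def by auto
      then show ?thesis by (metis UnI2 image_eqI)
    next
      case False
      then have "c \<in> ?C" using c unfolding poset_chains_def by auto
      then show ?thesis by blast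
    qed
  next
    fix c assume "c \<in> ?C \<union> insert x ` ?L"
    then consider "c \<in> ?C" | d where "d \<in> ?L" "c = insert x d" by blast
    then show "c \<in> poset_chains S R"
    proof cases
      case 2
      then show ?thesis
        using \<open>x \<in> S\<close> refl unfolding poset_chains_def poset_link_def by auto
    qed (auto simp: poset_chains_def)
  qed
  have link_chains: "\<And>c. c \<in> ?L \<Longrightarrow> finite c \<and> x \<notin> c"
    using fin unfolding poset_chains_def poset_link_def by (auto intro: finite_subset)
  have "chain_sum S R = chain_sum (S - {x}) R + (\<Sum>c\<in>insert x ` ?L. (-1) ^ card c)"
    unfolding chain_sum_def split
    by (rule sum.union_disjoint)
      (use fin in \<open>auto simp: finite_poset_chains poset_chains_def poset_link_def\<close>)
  then show ?thesis
    by (simp add: sum_sign_card_insert[OF link_chains] chain_sum_def)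
qed

lemma chain_sum_cone:
  assumes "finite_poset S R" and "y \<in> S" and comparable: "\<And>z. z \<in> S \<Longrightarrow> R z y \<or> R y z"
  shows "chain_sum S R = 0"
proof -
  have "poset_link S R y = S - {y}" using comparable unfolding poset_link_def by blast
  then show ?thesis using chain_sum_delete[OF assms(1,2)] by simp
qed

lemma chain_sum_ordinal_sum:
  assumes "finite L" and "finite U" and "L \<inter> U = {}"
    and below: "\<And>a b. a \<in> L \<Longrightarrow> b \<in> U \<Longrightarrow> R a b"
  shows "chain_sum (L \<union> U) R = chain_sum L R * chain_sum U R"
proof -
  let ?P = "poset_chains L R \<times> poset_chains U R" and ?union = "\<lambda>(a, b). a \<union> b"
  have inj: "inj_on ?union ?P"
    by (rule inj_on_inverseI[where g = "\<lambda>c. (c \<inter> L, c \<inter> U)"])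
      (use \<open>L \<inter> U = {}\<close> in \<open>auto simp: poset_chains_def\<close>)
  have image: "?union ` ?P = poset_chains (L \<union> U) R"
  proof (intro equalityI subsetI)
    fix c assume "c \<in> poset_chains (L \<union> U) R"
    then have "(c \<inter> L, c \<inter> U) \<in> ?P" and "c = ?union (c \<inter> L, c \<inter> U)"
      unfolding poset_chains_def by auto
    then show "c \<in> ?union ` ?P" by (rule rev_image_eqI)
  next
    fix c assume "c \<in> ?union ` ?P"
    then obtain a b where a: "a \<in> poset_chains L R" and b: "b \<in> poset_chains U R" and "c = a \<union> b"
      by auto
    have "a \<union> b \<in> poset_chains (L \<union> U) R"
      unfolding poset_chains_def
    proof (intro CollectI conjI ballI)
      show "a \<union> b \<subseteq> L \<union> U" using a b unfolding poset_chains_def by blast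
      have "a \<subseteq> L" "b \<subseteq> U" and chain_a: "\<forall>p\<in>a. \<forall>q\<in>a. R p q \<or> R q p"
        and chain_b: "\<forall>p\<in>b. \<forall>q\<in>b. R p q \<or> R q p"
        using a b unfolding poset_chains_def by auto
      fix p q assume "p \<in> a \<union> b" "q \<in> a \<union> b"
      then show "R p q \<or> R q p"
        by (elim UnE) (use chain_a chain_b below \<open>a \<subseteq> L\<close> \<open>b \<subseteq> U\<close> in blast)+
    qed
    then show "c \<in> poset_chains (L \<union> U) R" unfolding \<open>c = a \<union> b\<close> .
  qed
  have card: "card (a \<union> b) = card a + card b" if "(a, b) \<in> ?P" for a b
  proof -
    from that have "a \<subseteq> L" "b \<subseteq> U" unfolding poset_chains_def by auto
    with assms(1-3) show ?thesis by (intro card_Un_disjoint) (auto intro: finite_subset)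
  qed
  have "chain_sum (L \<union> U) R = (\<Sum>(a, b)\<in>?P. (-1) ^ card (a \<union> b))"
    unfolding chain_sum_def image[symmetric] sum.reindex[OF inj] by (simp add: comp_def case_prod_beta)
  also have "\<dots> = (\<Sum>(a, b)\<in>?P. (-1) ^ card a * (-1) ^ card b)"
    by (rule sum.cong) (auto simp: card power_add)
  finally show ?thesis
    unfolding chain_sum_def sum_product sum.cartesian_product by simp
qed

lemma chain_sum_link:
  assumes "finite_poset S R" and "x \<in> S"
  shows "chain_sum (poset_link S R x) R
       = chain_sum {y\<in>S. R y x \<and> y \<noteq> x} R * chain_sum {y\<in>S. R x y \<and> y \<noteq> x} R"
proof -
  let ?L = "{y\<in>S. R y x \<and> y \<noteq> x}" and ?U = "{y\<in>S. R x y \<and> y \<noteq> x}"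
  have "finite S" and antisym: "\<And>a b. a \<in> S \<Longrightarrow> b \<in> S \<Longrightarrow> R a b \<Longrightarrow> R b a \<Longrightarrow> a = b"
    and trans: "\<And>a b c. a \<in> S \<Longrightarrow> b \<in> S \<Longrightarrow> c \<in> S \<Longrightarrow> R a b \<Longrightarrow> R b c \<Longrightarrow> R a c"
    using assms(1) unfolding finite_poset_def by blast+
  have "poset_link S R x = ?L \<union> ?U" unfolding poset_link_def by blast
  moreover have "chain_sum (?L \<union> ?U) R = chain_sum ?L R * chain_sum ?U R"
  proof (rule chain_sum_ordinal_sum)
    show "?L \<inter> ?U = {}" using \<open>x \<in> S\<close> antisym by blast
    show "R a b" if "a \<in> ?L" "b \<in> ?U" for a b using that \<open>x \<in> S\<close> trans by blast
  qed (use \<open>finite S\<close> in auto)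
  ultimately show ?thesis by simp
qed

lemma poset_chains_order_iso:
  assumes h: "bij_betw h S S'" and iso: "\<And>x y. x \<in> S \<Longrightarrow> y \<in> S \<Longrightarrow> R' (h x) (h y) \<longleftrightarrow> R x y"
  shows "image h ` poset_chains S R = poset_chains S' R'"
proof -
  have S': "S' = h ` S" using h by (simp add: bij_betw_def)
  show ?thesis
  proof (intro equalityI subsetI)
    fix c' assume c': "c' \<in> poset_chains S' R'"
    let ?c = "{x\<in>S. h x \<in> c'}"
    have "c' \<subseteq> h ` S" using c' S' unfolding poset_chains_def by simp
    have "c' = h ` ?c"
    proof
      show "c' \<subseteq> h ` ?c"
      proof
        fix y assume "y \<in> c'"
        with \<open>c' \<subseteq> h ` S\<close> obtain x where "x \<in> S" "y = h x" by blast
        with \<open>y \<in> c'\<close> show "y \<in> h ` ?c" by (auto intro: image_eqI)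
      qed
    qed blast
    moreover have "?c \<in> poset_chains S R"
      using c' unfolding poset_chains_def by (simp add: iso[symmetric])
    ultimately show "c' \<in> image h ` poset_chains S R" by (rule image_eqI)
  next
    fix c' assume "c' \<in> image h ` poset_chains S R"
    then obtain c where c: "c \<in> poset_chains S R" and "c' = h ` c" by blast
    have "h ` c \<in> poset_chains S' R'"
      unfolding poset_chains_def
    proof (intro CollectI conjI ballI)
      show "h ` c \<subseteq> S'" using c S' unfolding poset_chains_def by auto
      fix p q assume "p \<in> h ` c" "q \<in> h ` c"
      then obtain a b where "a \<in> c" "b \<in> c" "p = h a" "q = h b" by blast
      moreover have "a \<in> S" "b \<in> S" "R a b \<or> R b a"
        using c \<open>a \<in> c\<close> \<open>b \<in> c\<close> unfolding poset_chains_def by auto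
      ultimately show "R' p q \<or> R' q p" by (simp add: iso)
    qed
    then show "c' \<in> poset_chains S' R'" unfolding \<open>c' = h ` c\<close> .
  qed
qed

lemma chain_sum_order_iso:
  assumes h: "bij_betw h S S'" and iso: "\<And>x y. x \<in> S \<Longrightarrow> y \<in> S \<Longrightarrow> R' (h x) (h y) \<longleftrightarrow> R x y"
  shows "chain_sum S' R' = chain_sum S R"
proof -
  have inj: "inj_on h S" using h by (rule bij_betw_imp_inj_on)
  have inj_image: "inj_on (image h) (poset_chains S R)"
    by (rule inj_on_subset[OF inj_on_image_Pow[OF inj]]) (auto simp: poset_chains_def)
  have image: "image h ` poset_chains S R = poset_chains S' R'"
    by (rule poset_chains_order_iso[of h S S' R' R, OF h iso])
  have card: "card (h ` c) = card c" if "c \<in> poset_chains S R" for c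
    by (rule card_image, rule inj_on_subset[OF inj]) (use that in \<open>simp add: poset_chains_def\<close>)
  have "chain_sum S' R' = (\<Sum>c\<in>poset_chains S R. (-1) ^ card (h ` c))"
    unfolding chain_sum_def image[symmetric] sum.reindex[OF inj_image] by (simp add: comp_def)
  also have "\<dots> = chain_sum S R"
    unfolding chain_sum_def by (rule sum.cong) (simp_all add: card)
  finally show ?thesis .
qed

section \<open>The space matrix\<close>

definition labelled_mat :: "'a list \<Rightarrow> ('a \<Rightarrow> 'a \<Rightarrow> 'b) \<Rightarrow> 'b mat" where
  "labelled_mat xs F = mat (length xs) (length xs) (\<lambda>(i, j). F (xs ! i) (xs ! j))"

lemma labelled_mat_carrier [simp]: "labelled_mat xs F \<in> carrier_mat (length xs) (length xs)"
  by (simp add: labelled_mat_def)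

lemma dim_labelled_mat [simp]:
  "dim_row (labelled_mat xs F) = length xs" "dim_col (labelled_mat xs F) = length xs"
  by (simp_all add: labelled_mat_def)

lemma index_labelled_mat [simp]:
  "i < length xs \<Longrightarrow> j < length xs \<Longrightarrow> labelled_mat xs F $$ (i, j) = F (xs ! i) (xs ! j)"
  by (simp add: labelled_mat_def)

lemma labelled_mat_cong:
  assumes "\<And>x y. x \<in> set xs \<Longrightarrow> y \<in> set xs \<Longrightarrow> F x y = G x y"
  shows "labelled_mat xs F = labelled_mat xs G"
  by (rule eq_matI) (simp_all add: assms)

lemma det_labelled_mat_single: "det (labelled_mat [x] F) = F x x"
  by (subst det_single) (auto simp: labelled_mat_def)

lemma signof_mult_self: "(signof p :: 'b :: comm_ring_1) * signof p = 1"
  by (metis of_int_1 of_int_mult sign_idempotent)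

lemma det_labelled_mat_perm:
  fixes F :: "'a \<Rightarrow> 'a \<Rightarrow> 'b :: comm_ring_1"
  assumes "distinct xs" and "distinct ys" and "set xs = set ys"
  shows "det (labelled_mat ys F) = det (labelled_mat xs F)"
proof -
  let ?n = "length xs" and ?A = "labelled_mat xs F"
  have "mset ys = mset xs" using assms by (simp add: set_eq_iff_mset_eq_distinct)
  then obtain p where p: "p permutes {..<?n}" and ys: "permute_list p xs = ys"
    by (rule mset_eq_permutation)
  have p': "p permutes {0..<?n}" using p by (simp add: lessThan_atLeast0)
  have p_less: "\<And>i. i < ?n \<Longrightarrow> p i < ?n" using permutes_in_image[OF p] by simp
  define B where "B = mat ?n ?n (\<lambda>(i, j). ?A $$ (p i, j))"
  have B: "B \<in> carrier_mat ?n ?n" unfolding B_def by simp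
  have "labelled_mat ys F = transpose_mat (mat ?n ?n (\<lambda>(i, j). transpose_mat B $$ (p i, j)))"
    by (rule eq_matI) (auto simp: B_def p_less permute_list_nth[OF p] simp flip: ys)
  then have "det (labelled_mat ys F) = det (mat ?n ?n (\<lambda>(i, j). transpose_mat B $$ (p i, j)))"
    by (simp add: det_transpose[of _ ?n])
  also have "\<dots> = signof p * det B"
    using det_permute_rows[OF transpose_carrier_mat[THEN iffD2, OF B] p'] by (simp add: det_transpose[OF B])
  also have "\<dots> = signof p * signof p * det ?A"
    unfolding B_def by (simp add: det_permute_rows[OF labelled_mat_carrier p'])
  finally show ?thesis by (simp add: signof_mult_self)
qed

lemma labelled_mat_append:
  "labelled_mat (xs @ ys) F = four_block_mat
     (labelled_mat xs F) (mat (length xs) (length ys) (\<lambda>(i, j). F (xs ! i) (ys ! j)))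
     (mat (length ys) (length xs) (\<lambda>(i, j). F (ys ! i) (xs ! j))) (labelled_mat ys F)"
  by (rule eq_matI) (auto simp: nth_append)

lemma det_labelled_mat_append_lower_zero:
  fixes F :: "'a \<Rightarrow> 'a \<Rightarrow> 'b :: idom"
  assumes "\<And>x y. x \<in> set ys \<Longrightarrow> y \<in> set xs \<Longrightarrow> F x y = 0"
  shows "det (labelled_mat (xs @ ys) F) = det (labelled_mat xs F) * det (labelled_mat ys F)"
  unfolding labelled_mat_append
  by (rule det_four_block_mat_lower_left_zero[of _ "length xs" _ "length ys"])
    (auto intro!: eq_matI simp: assms)

lemma det_labelled_mat_append_upper_zero:
  fixes F :: "'a \<Rightarrow> 'a \<Rightarrow> 'b :: idom"
  assumes "\<And>x y. x \<in> set xs \<Longrightarrow> y \<in> set ys \<Longrightarrow> F x y = 0"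
  shows "det (labelled_mat (xs @ ys) F) = det (labelled_mat xs F) * det (labelled_mat ys F)"
  unfolding labelled_mat_append
  by (rule det_four_block_mat_upper_right_zero[of _ "length xs" _ "length ys"])
    (auto intro!: eq_matI simp: assms)

lemma det_row_add_split:
  fixes A B C :: "'b :: comm_ring_1 mat"
  assumes "A \<in> carrier_mat n n" "B \<in> carrier_mat n n" "C \<in> carrier_mat n n" and "k < n"
    and rows: "\<And>i j. i < n \<Longrightarrow> j < n \<Longrightarrow> i \<noteq> k \<Longrightarrow> B $$ (i, j) = A $$ (i, j) \<and> C $$ (i, j) = A $$ (i, j)"
    and row_k: "\<And>j. j < n \<Longrightarrow> A $$ (k, j) = B $$ (k, j) + C $$ (k, j)"
  shows "det A = det B + det C"
proof -
  let ?M = "\<lambda>a. mat\<^sub>r n n (\<lambda>i. if i = k then a else row A i)"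
  have "A = ?M (row B k + row C k)" "B = ?M (row B k)" "C = ?M (row C k)"
    using assms by (auto intro!: eq_matI)
  moreover have "det (?M (row B k + row C k)) = det (?M (row B k)) + det (?M (row C k))"
    using det_row_add[of "\<lambda>_. row B k" k n "\<lambda>_. row C k" "\<lambda>i. row A i"] assms(1-4) by auto
  ultimately show ?thesis by metis
qed

lemma det_subtract_first_row:
  fixes A :: "'b :: comm_ring_1 mat"
  assumes A: "A \<in> carrier_mat n n"
  shows "det (mat n n (\<lambda>(i, j). if i = 0 then A $$ (0, j) else A $$ (i, j) - A $$ (0, j))) = det A"
proof -
  define E :: "'b mat" where
    "E = mat n n (\<lambda>(i, l). (if i = l then 1 else 0) - (if l = 0 \<and> l < i then 1 else 0))"
  have E: "E \<in> carrier_mat n n" unfolding E_def by simp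
  have "det E = prod_list (diag_mat E)"
    by (rule det_lower_triangular[OF _ E]) (simp add: E_def)
  also have "\<dots> = 1" unfolding prod_list_diag_prod by (simp add: E_def)
  finally have "det E = 1" .
  moreover have "E * A = mat n n (\<lambda>(i, j). if i = 0 then A $$ (0, j) else A $$ (i, j) - A $$ (0, j))"
  proof (rule eq_matI)
    fix i j assume "i < dim_row (mat n n (\<lambda>(i, j). if i = 0 then A $$ (0, j) else A $$ (i, j) - A $$ (0, j)))"
      and "j < dim_col (mat n n (\<lambda>(i, j). if i = 0 then A $$ (0, j) else A $$ (i, j) - A $$ (0, j)))"
    then have i: "i < n" and j: "j < n" by auto
    have "(E * A) $$ (i, j) = (\<Sum>l = 0..<n. E $$ (i, l) * A $$ (l, j))"
      using i j A E by (simp add: scalar_prod_def)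
    also have "\<dots> = (\<Sum>l = 0..<n. (if l = i then A $$ (i, j) else 0) - (if l = 0 then if 0 < i then A $$ (0, j) else 0 else 0))"
      using i by (intro sum.cong) (auto simp: E_def)
    also have "\<dots> = (if i = 0 then A $$ (0, j) else A $$ (i, j) - A $$ (0, j))"
      using i by (simp add: sum_subtractf)
    finally show "(E * A) $$ (i, j) = mat n n (\<lambda>(i, j). if i = 0 then A $$ (0, j) else A $$ (i, j) - A $$ (0, j)) $$ (i, j)"
      using i j by simp
  qed (use A E in auto)
  ultimately show ?thesis using det_mult[OF E A] by simp
qed

lemma det_labelled_mat_zeta:
  assumes "finite_poset S R" and "distinct xs" and "set xs = S"
  shows "det (labelled_mat xs (\<lambda>x y. of_bool (R x y))) = (1 :: 'b :: idom)"
  using assms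
proof (induction "length xs" arbitrary: xs S rule: less_induct)
  case less
  let ?Z = "\<lambda>x y. of_bool (R x y) :: 'b"
  show ?case
  proof (cases "xs = []")
    case True
    then show ?thesis by (simp add: labelled_mat_def)
  next
    case False
    then obtain x0 where "x0 \<in> S" using less.prems(3) by (cases xs) auto
    then obtain M where M: "M \<in> S" and max: "\<forall>y\<in>S. R M y \<longrightarrow> y = M"
      using finite_poset_ex_minimal[OF finite_poset_converse[OF less.prems(1)], of x0 "\<lambda>_. True"] by auto
    have "finite S" using less.prems(1) unfolding finite_poset_def by blast
    then obtain ys where ys: "distinct ys" "set ys = S - {M}"
      using finite_distinct_list[of "S - {M}"] by blast
    have "length ys = card (S - {M})" "length xs = card S"
      using ys less.prems(2,3) by (simp_all flip: distinct_card)
    then have "length ys < length xs" using card_Diff1_less[OF \<open>finite S\<close> M] by simp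
    have "det (labelled_mat xs ?Z) = det (labelled_mat (ys @ [M]) ?Z)"
      by (rule det_labelled_mat_perm) (use ys M less.prems(2,3) in auto)
    also have "\<dots> = det (labelled_mat ys ?Z) * det (labelled_mat [M] ?Z)"
      by (rule det_labelled_mat_append_lower_zero) (use ys max in auto)
    also have "det (labelled_mat ys ?Z) = 1"
      using less.hyps[OF \<open>length ys < length xs\<close> finite_poset_subset[OF less.prems(1)] ys(1,2)] by blast
    also have "det (labelled_mat [M] ?Z) = 1"
      using M less.prems(1) by (simp add: det_labelled_mat_single finite_poset_def)
    finally show ?thesis by simp
  qed
qed

(* Subtracting the row of m from all other rows makes the matrix block triangular. *)
lemma det_space_mat_replace_minimal_row:
  assumes fp: "finite_poset S R" and dist: "distinct (m # ws @ us)" and set: "set (m # ws @ us) = S"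
    and min: "\<And>y. y \<in> S \<Longrightarrow> R y m \<Longrightarrow> y = m" and up: "set us = {y\<in>S. R m y \<and> y \<noteq> m}"
  shows "det (labelled_mat (m # ws @ us)
           (\<lambda>x y. if x = m then of_bool (y \<notin> set us) else of_bool (\<not> R x y)))
       = (-1) ^ length ws * det (labelled_mat us (\<lambda>x y. of_bool (\<not> R x y) :: 'b :: idom))"
proof -
  let ?xs = "m # ws @ us" and ?F = "\<lambda>x y. of_bool (\<not> R x y) :: 'b"
  let ?F1 = "\<lambda>x y. if x = m then of_bool (y \<notin> set us) else ?F x y"
  have trans: "\<And>a b c. a \<in> S \<Longrightarrow> b \<in> S \<Longrightarrow> c \<in> S \<Longrightarrow> R a b \<Longrightarrow> R b c \<Longrightarrow> R a c"
    using fp unfolding finite_poset_def by blast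
  have m_notin: "m \<notin> set ws" "m \<notin> set us" and disj: "set ws \<inter> set us = {}" using dist by auto
  have other: "?xs ! i \<noteq> m" if "0 < i" "i < length ?xs" for i
    using that nth_eq_iff_index_eq[OF dist, of i 0] by auto
  define P where "P x y = (if x = m then of_bool (y \<notin> set us) else ?F x y - of_bool (y \<notin> set us))"
    for x y
  have "labelled_mat ?xs P = mat (length ?xs) (length ?xs) (\<lambda>(i, j).
      if i = 0 then labelled_mat ?xs ?F1 $$ (0, j)
      else labelled_mat ?xs ?F1 $$ (i, j) - labelled_mat ?xs ?F1 $$ (0, j))"
    by (rule eq_matI) (use other in \<open>auto simp: P_def\<close>)
  then have "det (labelled_mat ?xs ?F1) = det (labelled_mat ?xs P)"
    using det_subtract_first_row[OF labelled_mat_carrier[of ?xs ?F1]] by simp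
  also have "\<dots> = det (labelled_mat [m] P) * det (labelled_mat (ws @ us) P)"
    by (rule det_labelled_mat_append_lower_zero[of _ "[m]", simplified])
      (use min set m_notin in \<open>auto simp: P_def\<close>)
  also have "det (labelled_mat (ws @ us) P) = det (labelled_mat ws P) * det (labelled_mat us P)"
  proof (rule det_labelled_mat_append_lower_zero)
    fix x y assume "x \<in> set us" "y \<in> set ws"
    moreover have "\<not> R x y"
      using calculation trans[of m x y] up set dist by auto
    ultimately show "P x y = 0" using m_notin disj by (auto simp: P_def)
  qed
  also have "labelled_mat ws P = labelled_mat ws (\<lambda>x y. - of_bool (R x y))"
    by (rule labelled_mat_cong) (use m_notin disj in \<open>auto simp: P_def\<close>)
  also have "\<dots> = (-1) \<cdot>\<^sub>m labelled_mat ws (\<lambda>x y. of_bool (R x y))"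
    by (rule eq_matI) simp_all
  also have "labelled_mat us P = labelled_mat us ?F"
    by (rule labelled_mat_cong) (use m_notin in \<open>auto simp: P_def\<close>)
  moreover have "P m m = 1" by (simp add: P_def m_notin)
  moreover have "det (labelled_mat ws (\<lambda>x y. of_bool (R x y))) = (1 :: 'b)"
    by (rule det_labelled_mat_zeta[OF finite_poset_subset[OF fp]]) (use set dist in auto)
  ultimately show ?thesis by (simp add: det_labelled_mat_single)
qed

lemma det_space_mat_remove_minimal:
  assumes fp: "finite_poset S R" and dist: "distinct (m # ws @ us)" and set: "set (m # ws @ us) = S"
    and min: "\<And>y. y \<in> S \<Longrightarrow> R y m \<Longrightarrow> y = m" and up: "set us = {y\<in>S. R m y \<and> y \<noteq> m}"
  shows "det (labelled_mat (m # ws @ us) (\<lambda>x y. of_bool (\<not> R x y) :: 'b :: idom))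
       = (-1) ^ length ws * det (labelled_mat us (\<lambda>x y. of_bool (\<not> R x y)))
         - det (labelled_mat (ws @ us) (\<lambda>x y. of_bool (\<not> R x y)))"
proof -
  let ?xs = "m # ws @ us" and ?F = "\<lambda>x y. of_bool (\<not> R x y) :: 'b"
  let ?F1 = "\<lambda>x y. if x = m then of_bool (y \<notin> set us) else ?F x y"
  have "m \<in> S" using set by auto
  then have refl: "R m m" using fp unfolding finite_poset_def by blast
  have m_notin: "m \<notin> set ws" "m \<notin> set us" using dist by auto
  have ws_not_up: "\<not> R m y" if "y \<in> set ws" for y
    using that set up dist by auto
  have other: "?xs ! i \<noteq> m" if "0 < i" "i < length ?xs" for i
    using that nth_eq_iff_index_eq[OF dist, of i 0] by auto
  \<comment> \<open>The row of m is the indicator of ws, the difference of the rows of m in ?F1 and F2.\<close>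
  define F2 where "F2 x y = (if x = m then of_bool (y = m) else ?F x y)" for x y
  have row_split: "det (labelled_mat ?xs ?F1) = det (labelled_mat ?xs ?F) + det (labelled_mat ?xs F2)"
  proof (rule det_row_add_split[where k = 0])
    fix j assume "j < length ?xs"
    then have "?xs ! j \<in> set ?xs" by (rule nth_mem)
    then show "labelled_mat ?xs ?F1 $$ (0, j) = labelled_mat ?xs ?F $$ (0, j) + labelled_mat ?xs F2 $$ (0, j)"
      using \<open>j < length ?xs\<close> refl up ws_not_up m_notin by (auto simp: F2_def)
  qed (use other in \<open>auto simp: F2_def\<close>)
  have "det (labelled_mat ?xs F2) = det (labelled_mat [m] F2) * det (labelled_mat (ws @ us) F2)"
    by (rule det_labelled_mat_append_upper_zero[of "[m]", simplified]) (use m_notin in \<open>auto simp: F2_def\<close>)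
  also have "labelled_mat (ws @ us) F2 = labelled_mat (ws @ us) ?F"
    by (rule labelled_mat_cong) (use m_notin in \<open>auto simp: F2_def\<close>)
  moreover have "F2 m m = 1" by (simp add: F2_def)
  ultimately have F2_minor: "det (labelled_mat ?xs F2) = det (labelled_mat (ws @ us) ?F)"
    by (simp add: det_labelled_mat_single)
  have "det (labelled_mat ?xs ?F) = det (labelled_mat ?xs ?F1) - det (labelled_mat ?xs F2)"
    using row_split by (simp add: eq_diff_eq)
  then show ?thesis using det_space_mat_replace_minimal_row[OF assms] F2_minor by simp
qed

lemma det_labelled_mat_space:
  assumes "finite_poset S R" and "distinct xs" and "set xs = S"
  shows "det (labelled_mat xs (\<lambda>x y. of_bool (\<not> R x y))) = (-1) ^ length xs * chain_sum S R"
  using assms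
proof (induction "length xs" arbitrary: xs S rule: less_induct)
  case less
  let ?F = "\<lambda>x y. of_bool (\<not> R x y) :: int"
  note fp = less.prems(1)
  show ?case
  proof (cases "xs = []")
    case True
    then show ?thesis using less.prems(3) by (simp add: labelled_mat_def)
  next
    case False
    then obtain x0 where "x0 \<in> S" using less.prems(3) by (cases xs) auto
    then obtain m where m: "m \<in> S" and min: "\<forall>y\<in>S. R y m \<longrightarrow> y = m"
      using finite_poset_ex_minimal[OF fp, of x0 "\<lambda>_. True"] by auto
    define U where "U = {y\<in>S. R m y \<and> y \<noteq> m}"
    have "finite S" using fp unfolding finite_poset_def by blast
    then obtain ws us where ws: "distinct ws" "set ws = S - U - {m}" and us: "distinct us" "set us = U"
      using finite_distinct_list[of "S - U - {m}"] finite_distinct_list[of U] by (auto simp: U_def)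
    have dist: "distinct (m # ws @ us)" and set: "set (m # ws @ us) = S"
      using ws us m by (auto simp: U_def)
    have len: "length xs = Suc (length ws + length us)"
      using distinct_card[OF dist] distinct_card[OF less.prems(2)] set less.prems(3) by simp
    have IH_delete: "det (labelled_mat (ws @ us) ?F) = (-1) ^ (length ws + length us) * chain_sum (S - {m}) R"
      using less.hyps[of "ws @ us" "S - {m}"] len finite_poset_subset[OF fp] dist set by auto
    have IH_up: "det (labelled_mat us ?F) = (-1) ^ length us * chain_sum U R"
      using less.hyps[of us U] len finite_poset_subset[OF fp] us by (auto simp: U_def)
    have "poset_link S R m = U"
      using min unfolding poset_link_def U_def by auto
    then have chain_sum_S: "chain_sum S R = chain_sum (S - {m}) R - chain_sum U R"
      using chain_sum_delete[OF fp m] by simp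
    have "det (labelled_mat xs ?F) = det (labelled_mat (m # ws @ us) ?F)"
      by (rule det_labelled_mat_perm) (use dist set less.prems(2,3) in auto)
    also have "\<dots> = (-1) ^ length ws * det (labelled_mat us ?F) - det (labelled_mat (ws @ us) ?F)"
      by (rule det_space_mat_remove_minimal[OF fp dist set]) (use min us in \<open>auto simp: U_def\<close>)
    also have "\<dots> = (-1) ^ (length ws + length us) * (chain_sum U R - chain_sum (S - {m}) R)"
      unfolding IH_delete IH_up power_add by (simp add: algebra_simps)
    also have "\<dots> = (-1) ^ length xs * chain_sum S R"
      unfolding chain_sum_S len by (simp add: algebra_simps)
    finally show ?thesis .
  qed
qed

lemma det_space_matrix:
  assumes "finite_poset S R" and "bij_betw f {..<card S} S"
  shows "det (space_matrix (card S) f R) = (-1) ^ card S * chain_sum S R"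
proof -
  let ?xs = "map f [0..<card S]"
  have "space_matrix (card S) f R = labelled_mat ?xs (\<lambda>x y. of_bool (\<not> R x y))"
    by (rule eq_matI) (auto simp: space_matrix_def)
  moreover have "distinct ?xs" and "set ?xs = S"
    using assms(2) by (auto simp: bij_betw_def distinct_map atLeast0LessThan)
  ultimately show ?thesis using det_labelled_mat_space[OF assms(1)] by simp
qed

section \<open>Finite spaces\<close>

lemma openin_poset_topology:
  "openin (poset_topology S R) U \<longleftrightarrow> U \<subseteq> S \<and> (\<forall>x\<in>U. \<forall>y\<in>S. R y x \<longrightarrow> y \<in> U)"
proof -
  have "istopology (\<lambda>U. U \<subseteq> S \<and> (\<forall>x\<in>U. \<forall>y\<in>S. R y x \<longrightarrow> y \<in> U))"
    unfolding istopology_def by blast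
  then show ?thesis unfolding poset_topology_def by simp
qed

lemma topspace_poset_topology [simp]: "topspace (poset_topology S R) = S"
  unfolding topspace_def openin_poset_topology by auto

lemma openin_poset_topology_down_set:
  assumes "finite_poset S R" and "x \<in> S"
  shows "openin (poset_topology S R) {y\<in>S. R y x}"
  using assms unfolding openin_poset_topology finite_poset_def by blast

lemma subtopology_poset_topology:
  assumes "finite_poset S R" and "A \<subseteq> S"
  shows "subtopology (poset_topology S R) A = poset_topology A R"
  unfolding topology_eq
proof (intro allI iffI)
  fix V assume "openin (subtopology (poset_topology S R) A) V"
  then show "openin (poset_topology A R) V"
    unfolding openin_subtopology openin_poset_topology using \<open>A \<subseteq> S\<close> by blast
next
  fix V assume V: "openin (poset_topology A R) V"
  have trans: "\<And>a b c. a \<in> S \<Longrightarrow> b \<in> S \<Longrightarrow> c \<in> S \<Longrightarrow> R a b \<Longrightarrow> R b c \<Longrightarrow> R a c"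
    and refl: "\<And>a. a \<in> S \<Longrightarrow> R a a"
    using assms(1) unfolding finite_poset_def by blast+
  let ?T = "{y\<in>S. \<exists>v\<in>V. R y v}"
  have "V \<subseteq> A" and down: "\<And>v y. v \<in> V \<Longrightarrow> y \<in> A \<Longrightarrow> R y v \<Longrightarrow> y \<in> V"
    using V unfolding openin_poset_topology by auto
  have "openin (poset_topology S R) ?T"
    unfolding openin_poset_topology using trans \<open>V \<subseteq> A\<close> \<open>A \<subseteq> S\<close> by blast
  moreover have "V = ?T \<inter> A" using \<open>V \<subseteq> A\<close> \<open>A \<subseteq> S\<close> refl down by blast
  ultimately show "openin (subtopology (poset_topology S R) A) V"
    unfolding openin_subtopology by blast
qed

lemma continuous_map_poset_topology:
  assumes "finite_poset S' R'"
  shows "continuous_map (poset_topology S R) (poset_topology S' R') f \<longleftrightarrow>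
    (\<forall>x\<in>S. f x \<in> S') \<and> (\<forall>x\<in>S. \<forall>y\<in>S. R x y \<longrightarrow> R' (f x) (f y))"
proof
  assume cont: "continuous_map (poset_topology S R) (poset_topology S' R') f"
  then have maps: "\<forall>x\<in>S. f x \<in> S'" unfolding continuous_map_def by auto
  moreover have "R' (f x) (f y)" if "x \<in> S" "y \<in> S" "R x y" for x y
  proof -
    have "openin (poset_topology S R) {z \<in> S. f z \<in> {z\<in>S'. R' z (f y)}}"
      using openin_continuous_map_preimage[OF cont openin_poset_topology_down_set[OF assms]] maps \<open>y \<in> S\<close>
      by simp
    moreover have "R' (f y) (f y)" using assms maps \<open>y \<in> S\<close> unfolding finite_poset_def by blast
    ultimately show ?thesis using that maps unfolding openin_poset_topology by blast
  qed
  ultimately show "(\<forall>x\<in>S. f x \<in> S') \<and> (\<forall>x\<in>S. \<forall>y\<in>S. R x y \<longrightarrow> R' (f x) (f y))" by blast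
next
  assume "(\<forall>x\<in>S. f x \<in> S') \<and> (\<forall>x\<in>S. \<forall>y\<in>S. R x y \<longrightarrow> R' (f x) (f y))"
  then show "continuous_map (poset_topology S R) (poset_topology S' R') f"
    unfolding continuous_map_def openin_poset_topology by auto
qed

lemma homeomorphic_chain_sum:
  assumes "finite_poset S R" and "finite_poset S' R'"
    and "poset_topology S R homeomorphic_space poset_topology S' R'"
  shows "chain_sum S R = chain_sum S' R'"
proof -
  obtain f g where "homeomorphic_maps (poset_topology S R) (poset_topology S' R') f g"
    using assms(3) unfolding homeomorphic_space_def by blast
  then have f: "continuous_map (poset_topology S R) (poset_topology S' R') f"
    and g: "continuous_map (poset_topology S' R') (poset_topology S R) g"
    and gf: "\<forall>x\<in>S. g (f x) = x" and fg: "\<forall>y\<in>S'. f (g y) = y"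
    unfolding homeomorphic_maps_def by auto
  have mono_f: "(\<forall>x\<in>S. f x \<in> S') \<and> (\<forall>x\<in>S. \<forall>y\<in>S. R x y \<longrightarrow> R' (f x) (f y))"
    using f continuous_map_poset_topology[OF assms(2)] by blast
  have mono_g: "(\<forall>x\<in>S'. g x \<in> S) \<and> (\<forall>x\<in>S'. \<forall>y\<in>S'. R' x y \<longrightarrow> R (g x) (g y))"
    using g continuous_map_poset_topology[OF assms(1)] by blast
  have "bij_betw f S S'"
    by (rule bij_betw_byWitness[where f' = g]) (use gf fg mono_f mono_g in auto)
  moreover have "R' (f x) (f y) \<longleftrightarrow> R x y" if "x \<in> S" "y \<in> S" for x y
    using that mono_f mono_g gf by metis
  ultimately show ?thesis by (rule chain_sum_order_iso[symmetric])
qed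

section \<open>Beat points and contractible spaces\<close>

(* x is a down beat point (y the maximum of the points below x) or an up beat point
   (y the minimum of the points above x); in both cases z \<mapsto> (if z = x then y else z)
   is a monotone retraction onto S - {x}. *)
definition beat_point :: "'a set \<Rightarrow> ('a \<Rightarrow> 'a \<Rightarrow> bool) \<Rightarrow> 'a \<Rightarrow> 'a \<Rightarrow> bool" where
  "beat_point S R x y \<longleftrightarrow> x \<in> S \<and> y \<in> S \<and> y \<noteq> x \<and> (R y x \<or> R x y) \<and>
     (\<forall>z\<in>S - {x}. (R z x \<longrightarrow> R z y) \<and> (R x z \<longrightarrow> R y z))"

lemma beat_point_converse: "beat_point S (\<lambda>a b. R b a) x y \<longleftrightarrow> beat_point S R x y"
  by (auto simp: beat_point_def)

lemma monotone_below_id_eq_id: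
  assumes fp: "finite_poset S R" and core: "\<And>x y. \<not> beat_point S R x y"
    and maps: "\<forall>x\<in>S. f x \<in> S" and mono: "\<forall>x\<in>S. \<forall>y\<in>S. R x y \<longrightarrow> R (f x) (f y)"
    and below: "\<forall>x\<in>S. R (f x) x"
  shows "\<forall>x\<in>S. f x = x"
proof (rule ccontr)
  assume "\<not> (\<forall>x\<in>S. f x = x)"
  then obtain x0 where "x0 \<in> S" "f x0 \<noteq> x0" by blast
  then obtain x where x: "x \<in> S" "f x \<noteq> x" and min: "\<forall>z\<in>S. R z x \<longrightarrow> f z \<noteq> z \<longrightarrow> z = x"
    using finite_poset_ex_minimal[OF fp, of x0 "\<lambda>z. f z \<noteq> z"] by auto
  have trans: "\<And>a b c. a \<in> S \<Longrightarrow> b \<in> S \<Longrightarrow> c \<in> S \<Longrightarrow> R a b \<Longrightarrow> R b c \<Longrightarrow> R a c"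
    using fp unfolding finite_poset_def by blast
  have "beat_point S R x (f x)"
    unfolding beat_point_def
  proof (intro conjI ballI impI)
    show "x \<in> S" "f x \<in> S" "f x \<noteq> x" "R (f x) x \<or> R x (f x)" using x maps below by auto
    fix z assume z: "z \<in> S - {x}"
    show "R z (f x)" if "R z x"
    proof -
      have "f z = z" using min z that by auto
      moreover have "R (f z) (f x)" using mono z x that by blast
      ultimately show ?thesis by simp
    qed
    show "R (f x) z" if "R x z" using trans[of "f x" x z] below maps x z that by blast
  qed
  then show False using core by blast
qed

lemma monotone_above_id_eq_id:
  assumes "finite_poset S R" and "\<And>x y. \<not> beat_point S R x y"
    and "\<forall>x\<in>S. f x \<in> S" and "\<forall>x\<in>S. \<forall>y\<in>S. R x y \<longrightarrow> R (f x) (f y)"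
    and "\<forall>x\<in>S. R x (f x)"
  shows "\<forall>x\<in>S. f x = x"
proof -
  have "\<And>x y. \<not> beat_point S (\<lambda>a b. R b a) x y"
    using assms(2) unfolding beat_point_converse[of S R] .
  moreover have "\<forall>x\<in>S. \<forall>y\<in>S. R y x \<longrightarrow> R (f y) (f x)" using assms(4) by blast
  ultimately show ?thesis
    using monotone_below_id_eq_id[OF finite_poset_converse[OF assms(1)]] assms(3,5) by blast
qed

lemma homotopy_slice_monotone:
  assumes "finite_poset S R"
    and h: "continuous_map (prod_topology (top_of_set {0..1::real}) (poset_topology S R)) (poset_topology S R) h"
    and "t \<in> {0..1}"
  shows "(\<forall>x\<in>S. h (t, x) \<in> S) \<and> (\<forall>x\<in>S. \<forall>y\<in>S. R x y \<longrightarrow> R (h (t, x)) (h (t, y)))"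
proof -
  have "continuous_map (poset_topology S R) (prod_topology (top_of_set {0..1::real}) (poset_topology S R)) (\<lambda>x. (t, x))"
    by (rule continuous_map_pairedI) (use \<open>t \<in> {0..1}\<close> in simp_all)
  then have "continuous_map (poset_topology S R) (poset_topology S R) (h \<circ> (\<lambda>x. (t, x)))"
    using h by (rule continuous_map_compose)
  then show ?thesis by (simp add: continuous_map_poset_topology[OF assms(1)])
qed

lemma homotopy_locally_below:
  assumes fp: "finite_poset S R"
    and h: "continuous_map (prod_topology (top_of_set {0..1::real}) (poset_topology S R)) (poset_topology S R) h"
    and "t \<in> {0..1}"
  obtains V where "openin (top_of_set {0..1}) V" and "t \<in> V"
    and "\<And>s x. s \<in> V \<Longrightarrow> x \<in> S \<Longrightarrow> R (h (s, x)) (h (t, x))"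
proof -
  let ?I = "top_of_set {0..1::real}" and ?U = "\<lambda>x. {z\<in>S. R z (h (t, x))}"
  have fin: "finite S" and refl: "\<And>a. a \<in> S \<Longrightarrow> R a a"
    using fp unfolding finite_poset_def by blast+
  have slice: "\<forall>x\<in>S. h (t, x) \<in> S" using homotopy_slice_monotone[OF fp h \<open>t \<in> {0..1}\<close>] by blast
  have "openin ?I {s \<in> topspace ?I. h (s, x) \<in> ?U x}" if "x \<in> S" for x
  proof (rule openin_continuous_map_preimage)
    have "continuous_map ?I (prod_topology ?I (poset_topology S R)) (\<lambda>s. (s, x))"
      by (rule continuous_map_pairedI) (use \<open>x \<in> S\<close> in simp_all)
    then have "continuous_map ?I (poset_topology S R) (h \<circ> (\<lambda>s. (s, x)))"
      using h by (rule continuous_map_compose)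
    then show "continuous_map ?I (poset_topology S R) (\<lambda>s. h (s, x))" by (simp add: o_def)
    show "openin (poset_topology S R) (?U x)"
      using openin_poset_topology_down_set[OF fp] slice \<open>x \<in> S\<close> by blast
  qed
  then have "openin ?I ((\<Inter>x\<in>S. {s \<in> topspace ?I. h (s, x) \<in> ?U x}) \<inter> topspace ?I)"
    by (rule openin_INT[OF fin])
  moreover have "t \<in> (\<Inter>x\<in>S. {s \<in> topspace ?I. h (s, x) \<in> ?U x}) \<inter> topspace ?I"
    using \<open>t \<in> {0..1}\<close> slice refl by auto
  ultimately show ?thesis by (rule that) auto
qed

lemma homotopy_id_locally_constant:
  assumes fp: "finite_poset S R" and core: "\<And>x y. \<not> beat_point S R x y"
    and h: "continuous_map (prod_topology (top_of_set {0..1::real}) (poset_topology S R)) (poset_topology S R) h"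
    and t: "t \<in> {0..1}"
  obtains V where "openin (top_of_set {0..1}) V" and "t \<in> V"
    and "\<And>s. s \<in> V \<Longrightarrow> (\<forall>x\<in>S. h (s, x) = x) \<longleftrightarrow> (\<forall>x\<in>S. h (t, x) = x)"
proof -
  obtain V where V: "openin (top_of_set {0..1}) V" "t \<in> V"
    and below: "\<And>s x. s \<in> V \<Longrightarrow> x \<in> S \<Longrightarrow> R (h (s, x)) (h (t, x))"
    using homotopy_locally_below[OF fp h t] by blast
  have "(\<forall>x\<in>S. h (s, x) = x) \<longleftrightarrow> (\<forall>x\<in>S. h (t, x) = x)" if "s \<in> V" for s
  proof
    assume "\<forall>x\<in>S. h (s, x) = x"
    then show "\<forall>x\<in>S. h (t, x) = x"
      using monotone_above_id_eq_id[OF fp core, of "\<lambda>x. h (t, x)"] homotopy_slice_monotone[OF fp h t]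
        below[OF that] by simp
  next
    assume "\<forall>x\<in>S. h (t, x) = x"
    moreover have s: "s \<in> {0..1}" using openin_imp_subset[OF V(1)] that by auto
    ultimately show "\<forall>x\<in>S. h (s, x) = x"
      using monotone_below_id_eq_id[OF fp core, of "\<lambda>x. h (s, x)"] homotopy_slice_monotone[OF fp h s]
        below[OF that] by simp
  qed
  with V show ?thesis by (rule that)
qed

lemma core_homotopic_id_eq_id:
  assumes fp: "finite_poset S R" and core: "\<And>x y. \<not> beat_point S R x y"
    and "homotopic_with (\<lambda>_. True) (poset_topology S R) (poset_topology S R) id g"
  shows "\<forall>x\<in>S. g x = x"
proof -
  obtain h where h: "continuous_map (prod_topology (top_of_set {0..1::real}) (poset_topology S R)) (poset_topology S R) h"
    and h0: "\<forall>x. h (0, x) = x" and h1: "\<forall>x. h (1, x) = g x"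
    using assms(3) unfolding homotopic_with_def by auto
  have clopen: "openin (top_of_set {0..1}) {t\<in>{0..1}. (\<forall>x\<in>S. h (t, x) = x) \<longleftrightarrow> b}" for b
    unfolding openin_subopen[of _ "{t\<in>{0..1}. (\<forall>x\<in>S. h (t, x) = x) \<longleftrightarrow> b}"]
  proof
    fix t assume t: "t \<in> {t\<in>{0..1}. (\<forall>x\<in>S. h (t, x) = x) \<longleftrightarrow> b}"
    then obtain V where V: "openin (top_of_set {0..1}) V" "t \<in> V"
      and const: "\<And>s. s \<in> V \<Longrightarrow> (\<forall>x\<in>S. h (s, x) = x) \<longleftrightarrow> (\<forall>x\<in>S. h (t, x) = x)"
      using homotopy_id_locally_constant[OF fp core h] by blast
    have "V \<subseteq> {t\<in>{0..1}. (\<forall>x\<in>S. h (t, x) = x) \<longleftrightarrow> b}"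
      using openin_imp_subset[OF V(1)] const t by auto
    with V show "\<exists>V. openin (top_of_set {0..1}) V \<and> t \<in> V \<and>
        V \<subseteq> {t\<in>{0..1}. (\<forall>x\<in>S. h (t, x) = x) \<longleftrightarrow> b}" by blast
  qed
  define T where "T = {t\<in>{0..1::real}. \<forall>x\<in>S. h (t, x) = x}"
  have "openin (top_of_set {0..1}) T" using clopen[of True] unfolding T_def by simp
  moreover have "closedin (top_of_set {0..1}) T"
    unfolding closedin_def
  proof
    show "T \<subseteq> topspace (top_of_set {0..1})" unfolding T_def by auto
    have "topspace (top_of_set {0..1}) - T = {t\<in>{0..1}. (\<forall>x\<in>S. h (t, x) = x) \<longleftrightarrow> False}"
      unfolding T_def by auto
    then show "openin (top_of_set {0..1}) (topspace (top_of_set {0..1}) - T)"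
      using clopen[of False] by simp
  qed
  ultimately have "T = {} \<or> T = {0..1}" using connected_clopen[of "{0..1::real}"] connected_Icc by blast
  moreover have "0 \<in> T" unfolding T_def using h0 by simp
  ultimately have "1 \<in> T" by auto
  then show ?thesis unfolding T_def using h1 by simp
qed

lemma contractible_delete_beat_point:
  assumes fp: "finite_poset S R" and xy: "beat_point S R x y"
    and "contractible_space (poset_topology S R)"
  shows "contractible_space (poset_topology (S - {x}) R)"
proof -
  define r where "r z = (if z = x then y else z)" for z
  have fp': "finite_poset (S - {x}) R" using fp by (rule finite_poset_subset) blast
  have "R (r a) (r b)" if "a \<in> S" "b \<in> S" "R a b" for a b
  proof -
    have "R y y" using xy fp unfolding beat_point_def finite_poset_def by blast
    moreover have "\<And>z. z \<in> S - {x} \<Longrightarrow> (R z x \<longrightarrow> R z y) \<and> (R x z \<longrightarrow> R y z)"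
      using xy unfolding beat_point_def by blast
    ultimately show ?thesis using that unfolding r_def by (cases "a = x"; cases "b = x") auto
  qed
  then have "continuous_map (poset_topology S R) (poset_topology (S - {x}) R) r"
    unfolding continuous_map_poset_topology[OF fp'] using xy unfolding r_def beat_point_def by simp
  moreover have "continuous_map (poset_topology (S - {x}) R) (poset_topology S R) id"
    unfolding continuous_map_poset_topology[OF fp] by auto
  ultimately have "retraction_map (poset_topology S R) (poset_topology (S - {x}) R) r"
    unfolding retraction_map_def retraction_maps_def by (intro exI[of _ id]) (auto simp: r_def)
  then show ?thesis using assms(3) by (rule contractible_space_retraction_map_image)
qed

lemma chain_sum_delete_beat_point:
  assumes "finite_poset S R" and xy: "beat_point S R x y"
  shows "chain_sum S R = chain_sum (S - {x}) R"
proof -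
  have "chain_sum (poset_link S R x) R = 0"
  proof (rule chain_sum_cone)
    show "finite_poset (poset_link S R x) R"
      by (rule finite_poset_subset[OF assms(1)]) (auto simp: poset_link_def)
    show "y \<in> poset_link S R x" using xy unfolding beat_point_def poset_link_def by blast
    fix z assume "z \<in> poset_link S R x"
    then show "R z y \<or> R y z" using xy unfolding beat_point_def poset_link_def by blast
  qed
  moreover have "x \<in> S" using xy unfolding beat_point_def by blast
  ultimately show ?thesis using chain_sum_delete[OF assms(1)] by simp
qed

lemma contractible_chain_sum:
  assumes "finite_poset S R" and "S \<noteq> {}" and "contractible_space (poset_topology S R)"
  shows "chain_sum S R = 0"
  using assms
proof (induction "card S" arbitrary: S rule: less_induct)
  case less
  show ?case
  proof (cases "\<exists>x y. beat_point S R x y")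
    case True
    then obtain x y where xy: "beat_point S R x y" by blast
    then have "x \<in> S" "y \<in> S - {x}" unfolding beat_point_def by auto
    have "chain_sum (S - {x}) R = 0"
    proof (rule less.hyps)
      show "card (S - {x}) < card S"
        using less.prems(1) \<open>x \<in> S\<close> unfolding finite_poset_def by (blast intro: card_Diff1_less)
      show "finite_poset (S - {x}) R" using less.prems(1) by (rule finite_poset_subset) blast
      show "S - {x} \<noteq> {}" using \<open>y \<in> S - {x}\<close> by blast
      show "contractible_space (poset_topology (S - {x}) R)"
        using contractible_delete_beat_point[OF less.prems(1) xy less.prems(3)] .
    qed
    then show ?thesis using chain_sum_delete_beat_point[OF less.prems(1) xy] by simp
  next
    case False
    obtain a where "homotopic_with (\<lambda>_. True) (poset_topology S R) (poset_topology S R) id (\<lambda>_. a)"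
      using less.prems(3) unfolding contractible_space_def by blast
    then have "\<forall>x\<in>S. a = x" using core_homotopic_id_eq_id[OF less.prems(1)] False by blast
    then have "S = {a}" using less.prems(2) by auto
    moreover have "R a a" using less.prems(1) \<open>S = {a}\<close> unfolding finite_poset_def by blast
    ultimately show ?thesis using chain_sum_cone[OF less.prems(1), of a] by blast
  qed
qed

lemma weak_beat_point_chain_sum:
  assumes fp: "finite_poset S R" and "weak_beat_point S R x"
  shows "chain_sum S R = chain_sum (S - {x}) R"
proof -
  have x: "x \<in> S" using assms(2) unfolding weak_beat_point_def by blast
  have vanish: "chain_sum A R = 0" if "A \<subseteq> S" and "contractible_sub S R A" for A
    using that contractible_chain_sum[OF finite_poset_subset[OF fp \<open>A \<subseteq> S\<close>]]
    unfolding contractible_sub_def subtopology_poset_topology[OF fp \<open>A \<subseteq> S\<close>] by blast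
  have "chain_sum {y\<in>S. R y x \<and> y \<noteq> x} R = 0 \<or> chain_sum {y\<in>S. R x y \<and> y \<noteq> x} R = 0"
    using assms(2) vanish[of "{y\<in>S. R y x \<and> y \<noteq> x}"] vanish[of "{y\<in>S. R x y \<and> y \<noteq> x}"]
    unfolding weak_beat_point_def by auto
  then show ?thesis using chain_sum_delete[OF fp x] chain_sum_link[OF fp x] by auto
qed

lemma wbp_step_chain_sum:
  assumes "wbp_step S R S' R'"
  shows "chain_sum S R = chain_sum S' R'"
proof -
  have fp: "finite_poset S R" and fp': "finite_poset S' R'" using assms unfolding wbp_step_def by auto
  from assms consider
      (remove) x where "weak_beat_point S R x"
        "poset_topology (S - {x}) R homeomorphic_space poset_topology S' R'"
    | (add) x where "weak_beat_point S' R' x"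
        "poset_topology S R homeomorphic_space poset_topology (S' - {x}) R'"
    unfolding wbp_step_def by blast
  then show ?thesis
  proof cases
    case remove
    then show ?thesis
      using weak_beat_point_chain_sum[OF fp] homeomorphic_chain_sum[OF finite_poset_subset[OF fp] fp'] by auto
  next
    case add
    then show ?thesis
      using weak_beat_point_chain_sum[OF fp'] homeomorphic_chain_sum[OF fp finite_poset_subset[OF fp']] by auto
  qed
qed

lemma simple_homotopy_equivalent_chain_sum:
  assumes "finite_poset X leX" and "finite_poset Y leY"
    and "simple_homotopy_equivalent X leX Y leY"
  shows "chain_sum X leX = chain_sum Y leY"
proof -
  obtain S R where steps: "(\<lambda>(A, r) (B, r'). wbp_step A r B r')\<^sup>*\<^sup>* (X, leX) (S, R)"
    and hom: "poset_topology S R homeomorphic_space poset_topology Y leY"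
    using assms(3) unfolding simple_homotopy_equivalent_def by blast
  have "finite_poset (fst p) (snd p) \<and> chain_sum (fst p) (snd p) = chain_sum X leX"
    if "(\<lambda>(A, r) (B, r'). wbp_step A r B r')\<^sup>*\<^sup>* (X, leX) p" for p
    using that
  proof (induction rule: rtranclp_induct)
    case (step p q)
    then show ?case
      using wbp_step_chain_sum[of "fst p" "snd p" "fst q" "snd q"]
      by (auto simp: wbp_step_def split: prod.splits)
  qed (simp add: assms(1))
  from this[OF steps] show ?thesis
    using homeomorphic_chain_sum[OF _ assms(2) hom] by simp
qed

theorem mainTheorem6:
  fixes X Y :: "'a set" and leX leY :: "'a \<Rightarrow> 'a \<Rightarrow> bool"
    and f g :: "nat \<Rightarrow> 'a"
  assumes "finite_poset X leX" and "finite_poset Y leY"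
    and "simple_homotopy_equivalent X leX Y leY"
    and "bij_betw f {..<card X} X" and "bij_betw g {..<card Y} Y"
  shows "\<bar>Determinant.det (space_matrix (card X) f leX)\<bar>
       = \<bar>Determinant.det (space_matrix (card Y) g leY)\<bar>"
proof -
  have "chain_sum X leX = chain_sum Y leY"
    using simple_homotopy_equivalent_chain_sum[OF assms(1-3)] .
  then show ?thesis
    using det_space_matrix[OF assms(1,4)] det_space_matrix[OF assms(2,5)] by (simp add: abs_mult)
qed

end
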